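(* Let $T$ be a generalized tree-like graph with parameters $n_o\ge1$, $k_c$, $\hat k_b\ge1$, orchestrator vertices $o_1,\dots,o_{n_o}$ and bridge sets $B_i=N_{o_i}\cap N_{o_{i+1}}$. Let $1\le a\le b\le n_o$ and let $c\ne c'$ be clients with $c\in N_{o_a}$, $c'\in N_{o_b}$, and, if $a<b$, $c\notin N_{o_{a+1}}$ and $c'\notin N_{o_{b-1}}$; then the proximity is $d(c,c')=b-a+1$. For each $m\in\{a,\dots,b-1\}$ choose a bridge $\beta_m\in B_m$. Starting from $T$, apply successively, for $m=a,a+1,\dots,b-1$, the $\sigma_x$-measurement rule at $o_m$ with support vertex $b_0=\beta_m$ (replace $H$ by $\tau_{\beta_m}(\tau_{o_m}(\tau_{\beta_m}(H))-o_m)$), and finally the $\sigma_x$-measurement rule at $o_b$ with support vertex $b_0=c'$. Then all these $d(c,c')$ operations are well defined (each support vertex is a neighbour of the measured vertex in the current graph) and in the resulting graph $c$ and $c'$ are adjacent. Equivalently, $d(c,c')$ single-qubit $\sigma_x$-measurements on orchestrator qubits along a shortest $c$–$c'$ path create, up to local unitaries, an edge (artificial link) between $c$ and $c'$.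
   Context: All graphs are finite, simple and undirected. For $H=(V,E)$ and $a\in V$, $N_a=\{b:\{a,b\}\in E\}$; $\tau_a(H)$ toggles the edge $\{b,c\}$ for every pair of distinct $b,c\in N_a$ and leaves other edges unchanged; $H-a$ deletes $a$ and its incident edges. Graph state $\ket{H}=\prod_{\{a,b\}\in E}\mathrm{CZ}_{ab}\ket{+}^{\otimes|V|}$; measuring the qubit at $a$ in $\sigma_x$ with chosen $b_0\in N_a$ yields, up to local unitaries, the graph state of $\tau_{b_0}(\tau_a(\tau_{b_0}(H))-a)$. Generalized tree-like graph with parameters $n_o\ge1$, $k_c$, $\hat k_b\ge1$: vertex set $\{o_1,\dots,o_{n_o}\}\cup V_c$ (disjoint) such that (i) every edge joins some $o_i$ to a client; (ii) $|N_{o_i}|=k_c$ for all $i$; (iii) $|N_{o_i}\cap N_{o_{i+1}}|=\hat k_b$ for $1\le i<n_o$; (iv) $N_{o_i}\cap N_{o_j}=\emptyset$ for $|i-j|\ge2$; (v) every client is adjacent to some $o_i$. A client adjacent to more than one orchestrator vertex is a bridge. The proximity $d(c,c')$ of distinct clients is $1$ plus the number of bridges lying strictly between $c$ and $c'$ on a shortest $c$–$c'$ path. *)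

theory Defs
  imports Main
begin

text \<open>The graph operations below only act on the edge set
  (deleting a vertex removes its incident edges).\<close>

definition simple_graph :: "'a set \<Rightarrow> 'a set set \<Rightarrow> bool" where
  "simple_graph V E \<longleftrightarrow> finite V \<and> (\<forall>e\<in>E. \<exists>x y. x \<in> V \<and> y \<in> V \<and> x \<noteq> y \<and> e = {x, y})"

definition nbhd :: "'a set set \<Rightarrow> 'a \<Rightarrow> 'a set" where
  "nbhd E a = {b. {a, b} \<in> E}"

definition loc_comp :: "'a set set \<Rightarrow> 'a \<Rightarrow> 'a set set" where
  "loc_comp E a =
     (let X = {{b, c} | b c. b \<in> nbhd E a \<and> c \<in> nbhd E a \<and> b \<noteq> c}
      in (E - X) \<union> (X - E))"

definition del_vertex :: "'a set set \<Rightarrow> 'a \<Rightarrow> 'a set set" where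
  "del_vertex E a = {e \<in> E. a \<notin> e}"

definition meas_x :: "'a set set \<Rightarrow> 'a \<Rightarrow> 'a \<Rightarrow> 'a set set" where
  "meas_x E a b0 = loc_comp (del_vertex (loc_comp (loc_comp E b0) a) a) b0"

definition tree_like ::
  "'a set \<Rightarrow> 'a set set \<Rightarrow> nat \<Rightarrow> nat \<Rightarrow> nat \<Rightarrow> (nat \<Rightarrow> 'a) \<Rightarrow> 'a set \<Rightarrow> bool" where
  "tree_like V E n_o k_c kb orc Vc \<longleftrightarrow>
     simple_graph V E \<and> n_o \<ge> 1 \<and> kb \<ge> 1 \<and>
     inj_on orc {1..n_o} \<and> orc ` {1..n_o} \<inter> Vc = {} \<and> V = orc ` {1..n_o} \<union> Vc \<and>
     (\<forall>e\<in>E. \<exists>i\<in>{1..n_o}. \<exists>c\<in>Vc. e = {orc i, c}) \<and>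
     (\<forall>i\<in>{1..n_o}. card (nbhd E (orc i)) = k_c) \<and>
     (\<forall>i. 1 \<le> i \<and> i < n_o \<longrightarrow> card (nbhd E (orc i) \<inter> nbhd E (orc (i + 1))) = kb) \<and>
     (\<forall>i\<in>{1..n_o}. \<forall>j\<in>{1..n_o}. (i + 2 \<le> j \<or> j + 2 \<le> i) \<longrightarrow>
         nbhd E (orc i) \<inter> nbhd E (orc j) = {}) \<and>
     (\<forall>c\<in>Vc. \<exists>i\<in>{1..n_o}. c \<in> nbhd E (orc i))"

definition is_bridge :: "'a set set \<Rightarrow> nat \<Rightarrow> (nat \<Rightarrow> 'a) \<Rightarrow> 'a set \<Rightarrow> 'a \<Rightarrow> bool" where
  "is_bridge E n_o orc Vc v \<longleftrightarrow> v \<in> Vc \<and> card {i \<in> {1..n_o}. v \<in> nbhd E (orc i)} \<ge> 2"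

definition is_path :: "'a set set \<Rightarrow> 'a \<Rightarrow> 'a \<Rightarrow> 'a list \<Rightarrow> bool" where
  "is_path E x y p \<longleftrightarrow> p \<noteq> [] \<and> hd p = x \<and> last p = y \<and> distinct p \<and>
     (\<forall>i. i + 1 < length p \<longrightarrow> {p ! i, p ! (i + 1)} \<in> E)"

definition is_shortest_path :: "'a set set \<Rightarrow> 'a \<Rightarrow> 'a \<Rightarrow> 'a list \<Rightarrow> bool" where
  "is_shortest_path E x y p \<longleftrightarrow> is_path E x y p \<and>
     (\<forall>q. is_path E x y q \<longrightarrow> length p \<le> length q)"

definition path_proximity :: "'a set set \<Rightarrow> nat \<Rightarrow> (nat \<Rightarrow> 'a) \<Rightarrow> 'a set \<Rightarrow> 'a list \<Rightarrow> nat" where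
  "path_proximity E n_o orc Vc p =
     1 + card {i. 0 < i \<and> i + 1 < length p \<and> is_bridge E n_o orc Vc (p ! i)}"

definition proximity_is ::
  "'a set set \<Rightarrow> nat \<Rightarrow> (nat \<Rightarrow> 'a) \<Rightarrow> 'a set \<Rightarrow> 'a \<Rightarrow> 'a \<Rightarrow> nat \<Rightarrow> bool" where
  "proximity_is E n_o orc Vc x y d \<longleftrightarrow>
     (\<exists>p. is_shortest_path E x y p) \<and>
     (\<forall>p. is_shortest_path E x y p \<longrightarrow> path_proximity E n_o orc Vc p = d)"

fun meas_seq :: "'a set set \<Rightarrow> (nat \<Rightarrow> 'a) \<Rightarrow> (nat \<Rightarrow> 'a) \<Rightarrow> nat \<Rightarrow> nat \<Rightarrow> 'a set set" where
  "meas_seq E orc beta a 0 = E"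
| "meas_seq E orc beta a (Suc k) = meas_x (meas_seq E orc beta a k) (orc (a + k)) (beta (a + k))"

end

theory Submission
  imports Defs
begin

text \<open>A \<sigma>_x-measurement at o_m with support \<beta>_m only toggles edges inside neighbourhoods: it
  deletes o_m, replaces the edge o_m--c by o_(m+1)--c (o_(m+1) being the other neighbour of \<beta>_m),
  and keeps every edge at a vertex outside the closed neighbourhoods of o_a, \<dots>, o_m as it was in T.
  So after measuring o_a, \<dots>, o_(b-1) the client c is adjacent to o_b, which still has its original
  neighbour c', and the final measurement at o_b with support c' joins these two neighbours.

  The graph is bipartite between orchestrators and clients, and a client is adjacent only to
  orchestrators with consecutive indices, so along a path starting at c the orchestrator index grows
  by at most one every two steps.  Every c--c' path thus has at least 2(b-a)+3 vertices, the route
  c, o_a, \<beta>_a, \<dots>, \<beta>_(b-1), o_b, c' attains this bound, and on a path of this length the bridges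
  are exactly the b-a interior clients.\<close>

definition adj :: "'a set set \<Rightarrow> 'a \<Rightarrow> 'a \<Rightarrow> bool" where
  "adj E x y \<longleftrightarrow> {x, y} \<in> E"

lemma adj_commute: "adj E x y \<longleftrightarrow> adj E y x"
  by (simp add: adj_def insert_commute)

lemma nbhd_iff_adj: "y \<in> nbhd E x \<longleftrightarrow> adj E x y"
  by (simp add: nbhd_def adj_def)

lemma adj_loc_comp:
  "adj (loc_comp E z) x y \<longleftrightarrow> adj E x y \<noteq> (x \<noteq> y \<and> adj E z x \<and> adj E z y)"
proof -
  have "{x, y} \<in> {{u, v} | u v. u \<in> nbhd E z \<and> v \<in> nbhd E z \<and> u \<noteq> v}
      \<longleftrightarrow> x \<noteq> y \<and> adj E z x \<and> adj E z y"
    by (auto simp: nbhd_iff_adj doubleton_eq_iff)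
  then show ?thesis
    unfolding loc_comp_def Let_def adj_def by blast
qed

lemma adj_del_vertex: "adj (del_vertex E a) x y \<longleftrightarrow> adj E x y \<and> x \<noteq> a \<and> y \<noteq> a"
  by (auto simp: del_vertex_def adj_def)

lemma meas_x_isolates: "\<not> adj (meas_x G a b0) x a"
  using adj_commute[of G a b0] by (simp add: meas_x_def adj_loc_comp adj_del_vertex)

lemma meas_x_unchanged:
  assumes "u \<noteq> a" "v \<noteq> a" "\<not> adj G a u" "\<not> adj G b0 u"
  shows "adj (meas_x G a b0) u v \<longleftrightarrow> adj G u v"
  using assms adj_commute[of G u b0] adj_commute[of G u a]
  by (simp add: meas_x_def adj_loc_comp adj_del_vertex)

lemma meas_x_transfers_edge:
  assumes "distinct [a, b0, c, o']"
    and "adj G a c" "adj G a b0" "adj G b0 o'"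
    and "\<not> adj G a o'" "\<not> adj G b0 c" "\<not> adj G c o'"
  shows "adj (meas_x G a b0) o' c"
  using assms adj_commute[of G a b0] adj_commute[of G o' c]
  by (auto simp: meas_x_def adj_loc_comp adj_del_vertex)

lemma meas_x_joins_neighbours:
  assumes "distinct [a, c, c']" "adj G a c" "adj G a c'" "\<not> adj G c' c'"
  shows "adj (meas_x G a c') c c'"
  using assms adj_commute[of G a c'] adj_commute[of G c c']
  by (auto simp: meas_x_def adj_loc_comp adj_del_vertex)

locale tree_like_graph =
  fixes V :: "'a set" and E :: "'a set set" and n_o k_c kb :: nat
    and orc :: "nat \<Rightarrow> 'a" and Vc :: "'a set"
  assumes tree_like: "tree_like V E n_o k_c kb orc Vc"
begin

abbreviation orchestrators :: "'a set" where
  "orchestrators \<equiv> orc ` {1..n_o}"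

lemma orc_inj: "inj_on orc {1..n_o}"
  and orchestrators_clients_disjoint: "orchestrators \<inter> Vc = {}"
  and edges_orc_client: "\<forall>e\<in>E. \<exists>i\<in>{1..n_o}. \<exists>x\<in>Vc. e = {orc i, x}"
  and far_nbhds_disjoint: "\<forall>i\<in>{1..n_o}. \<forall>j\<in>{1..n_o}. (i + 2 \<le> j \<or> j + 2 \<le> i) \<longrightarrow>
         nbhd E (orc i) \<inter> nbhd E (orc j) = {}"
  using tree_like unfolding tree_like_def by blast+

lemma adj_cases:
  assumes "adj E x y"
  shows "x \<in> orchestrators \<and> y \<in> Vc \<or> x \<in> Vc \<and> y \<in> orchestrators"
proof -
  obtain i z where "i \<in> {1..n_o}" "z \<in> Vc" "{x, y} = {orc i, z}"
    using assms edges_orc_client unfolding adj_def by blast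
  then show ?thesis
    by (auto simp: doubleton_eq_iff)
qed

lemma orchestrator_notin_clients: "x \<in> orchestrators \<Longrightarrow> x \<notin> Vc"
  using orchestrators_clients_disjoint by blast

lemma not_adj_self: "\<not> adj E x x"
  using adj_cases orchestrator_notin_clients by blast

lemma not_adj_clients: "x \<in> Vc \<Longrightarrow> y \<in> Vc \<Longrightarrow> \<not> adj E x y"
  using adj_cases orchestrator_notin_clients by blast

lemma not_adj_orchestrators: "x \<in> orchestrators \<Longrightarrow> y \<in> orchestrators \<Longrightarrow> \<not> adj E x y"
  using adj_cases orchestrator_notin_clients by blast

lemma shared_client_index_le:
  assumes "i \<in> {1..n_o}" "j \<in> {1..n_o}" "adj E (orc i) x" "adj E (orc j) x"
  shows "i \<le> j + 1"
proof (rule ccontr)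
  assume "\<not> i \<le> j + 1"
  then have "nbhd E (orc i) \<inter> nbhd E (orc j) = {}"
    using assms(1,2) far_nbhds_disjoint by simp
  then show False
    using assms(3,4) by (auto simp: nbhd_iff_adj)
qed

lemma path_adj:
  "is_path E x y q \<Longrightarrow> i + 1 < length q \<Longrightarrow> adj E (q ! i) (q ! (i + 1))"
  unfolding is_path_def adj_def by blast

lemma path_first: "is_path E x y q \<Longrightarrow> q ! 0 = x"
  unfolding is_path_def by (metis hd_conv_nth)

lemma path_alternates:
  assumes "is_path E x y q" "x \<in> Vc" "i < length q"
  shows "q ! i \<in> (if even i then Vc else orchestrators)"
  using assms(3)
proof (induction i)
  case 0
  then show ?case
    using assms(2) path_first[OF assms(1)] by simp
next
  case (Suc i)
  have "adj E (q ! i) (q ! Suc i)"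
    using path_adj[OF assms(1), of i] Suc.prems by simp
  moreover have "q ! i \<in> (if even i then Vc else orchestrators)"
    using Suc by simp
  ultimately show ?case
    using adj_cases orchestrator_notin_clients by (cases "even i") (simp_all, blast+)
qed

lemma path_orc_index_le:
  assumes "is_path E x y q" "x \<in> Vc" "\<And>j. j \<in> {1..n_o} \<Longrightarrow> adj E (orc j) x \<Longrightarrow> j \<le> i0"
    and "2 * t + 1 < length q"
  shows "\<exists>j\<in>{1..n_o}. q ! (2 * t + 1) = orc j \<and> j \<le> i0 + t"
  using assms(4)
proof (induction t)
  case 0
  then obtain j where j: "j \<in> {1..n_o}" "q ! 1 = orc j"
    using path_alternates[OF assms(1,2), of 1] by auto
  then have "adj E (orc j) x"
    using path_adj[OF assms(1), of 0] path_first[OF assms(1)] 0 j by (simp add: adj_commute)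
  then show ?case
    using j assms(3) by auto
next
  case (Suc t)
  then obtain j where j: "j \<in> {1..n_o}" "q ! (2 * t + 1) = orc j" "j \<le> i0 + t"
    by auto
  obtain j' where j': "j' \<in> {1..n_o}" "q ! (2 * Suc t + 1) = orc j'"
    using path_alternates[OF assms(1,2), of "2 * Suc t + 1"] Suc.prems by auto
  have "adj E (orc j) (q ! (2 * t + 2))" "adj E (orc j') (q ! (2 * t + 2))"
    using path_adj[OF assms(1), of "2 * t + 1"] path_adj[OF assms(1), of "2 * t + 2"] Suc.prems j j'
    by (auto simp: adj_commute)
  then have "j' \<le> j + 1"
    using shared_client_index_le j(1) j'(1) by blast
  then show ?case
    using j j' by auto
qed

lemma path_bridge_iff_even:
  assumes "is_path E x y q" "x \<in> Vc" "0 < i" "i + 1 < length q"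
  shows "is_bridge E n_o orc Vc (q ! i) \<longleftrightarrow> even i"
proof
  assume "is_bridge E n_o orc Vc (q ! i)"
  then show "even i"
    using path_alternates[OF assms(1,2), of i] assms(4) orchestrator_notin_clients
    unfolding is_bridge_def by (cases "even i") auto
next
  assume "even i"
  then have client: "q ! i \<in> Vc"
    using path_alternates[OF assms(1,2), of i] assms(4) by simp
  have "odd (i - 1)" "odd (i + 1)"
    using \<open>even i\<close> assms(3) by auto
  then obtain j1 j2 where j: "j1 \<in> {1..n_o}" "q ! (i - 1) = orc j1" "j2 \<in> {1..n_o}" "q ! (i + 1) = orc j2"
    using path_alternates[OF assms(1,2), of "i - 1"] path_alternates[OF assms(1,2), of "i + 1"]
      assms(4) by fastforce
  have "q ! (i - 1) \<noteq> q ! (i + 1)"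
    using assms(1,3,4) unfolding is_path_def by (simp add: nth_eq_iff_index_eq)
  then have "j1 \<noteq> j2"
    using j by auto
  have "adj E (orc j1) (q ! i)" "adj E (orc j2) (q ! i)"
    using path_adj[OF assms(1), of "i - 1"] path_adj[OF assms(1), of i] assms(3,4) j
    by (auto simp: adj_commute)
  then have "{j1, j2} \<subseteq> {j \<in> {1..n_o}. q ! i \<in> nbhd E (orc j)}"
    using j by (auto simp: nbhd_iff_adj)
  then have "card {j1, j2} \<le> card {j \<in> {1..n_o}. q ! i \<in> nbhd E (orc j)}"
    by (intro card_mono) auto
  then show "is_bridge E n_o orc Vc (q ! i)"
    using \<open>j1 \<noteq> j2\<close> client unfolding is_bridge_def by simp
qed

lemma path_proximity_client_path:
  assumes "is_path E x y q" "x \<in> Vc" "length q = 2 * n + 3"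
  shows "path_proximity E n_o orc Vc q = n + 1"
proof -
  have "{i. 0 < i \<and> i + 1 < length q \<and> is_bridge E n_o orc Vc (q ! i)} = (\<lambda>t. 2 * t) ` {1..n}"
  proof (intro set_eqI iffI)
    fix i
    assume "i \<in> {i. 0 < i \<and> i + 1 < length q \<and> is_bridge E n_o orc Vc (q ! i)}"
    then show "i \<in> (\<lambda>t. 2 * t) ` {1..n}"
      using path_bridge_iff_even[OF assms(1,2), of i] assms(3) by (auto elim!: evenE)
  next
    fix i
    assume "i \<in> (\<lambda>t. 2 * t) ` {1..n}"
    then show "i \<in> {i. 0 < i \<and> i + 1 < length q \<and> is_bridge E n_o orc Vc (q ! i)}"
      using path_bridge_iff_even[OF assms(1,2), of i] assms(3) by auto
  qed
  moreover have "card ((\<lambda>t. 2 * t) ` {1..n}) = n"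
    by (simp add: card_image inj_on_def)
  ultimately show ?thesis
    unfolding path_proximity_def by simp
qed

end

locale measurement_route = tree_like_graph +
  fixes a b :: nat and c c' :: 'a and beta :: "nat \<Rightarrow> 'a"
  assumes indices: "1 \<le> a" "a \<le> b" "b \<le> n_o"
    and clients: "c \<in> Vc" "c' \<in> Vc" "c \<noteq> c'"
    and adj_start: "adj E (orc a) c" and adj_end: "adj E (orc b) c'"
    and ends: "a < b \<Longrightarrow> \<not> adj E (orc (a + 1)) c \<and> \<not> adj E (orc (b - 1)) c'"
    and beta_bridge: "\<And>m. a \<le> m \<Longrightarrow> m < b \<Longrightarrow> adj E (orc m) (beta m) \<and> adj E (orc (m + 1)) (beta m)"
begin

lemma orc_in_range: "a \<le> j \<Longrightarrow> j \<le> b \<Longrightarrow> j \<in> {1..n_o}"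
  using indices by auto

lemma orc_eq_iff: "a \<le> i \<Longrightarrow> i \<le> b \<Longrightarrow> a \<le> j \<Longrightarrow> j \<le> b \<Longrightarrow> orc i = orc j \<longleftrightarrow> i = j"
  using inj_onD[OF orc_inj] orc_in_range by blast

lemma beta_client: "a \<le> m \<Longrightarrow> m < b \<Longrightarrow> beta m \<in> Vc"
  using beta_bridge adj_cases orc_in_range orchestrator_notin_clients by fastforce

lemma adj_start_index_le:
  assumes "a < b" "j \<in> {1..n_o}" "adj E (orc j) c"
  shows "j \<le> a"
proof -
  have "j \<le> a + 1"
    using shared_client_index_le[of j a c] assms adj_start orc_in_range[of a] indices by simp
  moreover have "j \<noteq> a + 1"
    using ends assms by auto
  ultimately show ?thesis
    by simp
qed

lemma adj_end_index_ge:
  assumes "a < b" "j \<in> {1..n_o}" "adj E (orc j) c'"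
  shows "b \<le> j"
proof -
  have "b \<le> j + 1"
    using shared_client_index_le[of b j c'] assms adj_end orc_in_range[of b] indices by simp
  moreover have "j \<noteq> b - 1"
    using ends assms by auto
  ultimately show ?thesis
    by simp
qed

lemma adj_beta_index:
  assumes "a \<le> m" "m < b" "j \<in> {1..n_o}" "adj E (orc j) (beta m)"
  shows "j = m \<or> j = m + 1"
  using shared_client_index_le[of j m "beta m"] shared_client_index_le[of "m + 1" j "beta m"]
    assms beta_bridge orc_in_range by fastforce

lemma beta_ne_start: "a \<le> m \<Longrightarrow> m < b \<Longrightarrow> beta m \<noteq> c"
  using adj_beta_index[of m a] adj_start ends beta_bridge indices by fastforce

lemma beta_ne_end: "a \<le> m \<Longrightarrow> m < b \<Longrightarrow> beta m \<noteq> c'"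
  using adj_beta_index[of m b] adj_end ends beta_bridge indices by fastforce

lemma beta_inj: "inj_on beta {a..<b}"
proof (rule inj_onI)
  fix m m'
  assume "m \<in> {a..<b}" "m' \<in> {a..<b}" "beta m = beta m'"
  then show "m = m'"
    using adj_beta_index[of m m'] adj_beta_index[of m' m] beta_bridge orc_in_range by fastforce
qed

definition route_client :: "nat \<Rightarrow> 'a" where
  "route_client t = (if t = 0 then c else if t = b - a + 1 then c' else beta (a + t - 1))"

definition route_vertex :: "nat \<Rightarrow> 'a" where
  "route_vertex i = (if even i then route_client (i div 2) else orc (a + i div 2))"

definition route :: "'a list" where
  "route = map route_vertex [0..<2 * (b - a) + 3]"

lemma route_client_in_clients: "t \<le> b - a + 1 \<Longrightarrow> route_client t \<in> Vc"
  using clients beta_client by (auto simp: route_client_def)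

lemma route_client_start: "route_client 0 = c"
  and route_client_end: "route_client (b - a + 1) = c'"
  by (simp_all add: route_client_def)

lemma route_client_inj: "inj_on route_client {0..b - a + 1}"
proof (rule inj_onI)
  fix s t
  assume s: "s \<in> {0..b - a + 1}" and t: "t \<in> {0..b - a + 1}"
    and eq: "route_client s = route_client t"
  have ne_start: "route_client k \<noteq> c" if "0 < k" "k \<le> b - a + 1" for k
    using that clients beta_ne_start[of "a + k - 1"] by (auto simp: route_client_def)
  have ne_end: "route_client k \<noteq> c'" if "k \<le> b - a" for k
    using that clients beta_ne_end[of "a + k - 1"] by (auto simp: route_client_def)
  show "s = t"
  proof (cases "s = 0 \<or> t = 0 \<or> s = b - a + 1 \<or> t = b - a + 1")
    case True
    then show ?thesis
      using ne_start[of s] ne_start[of t] ne_end[of s] ne_end[of t] s t eq clients(3)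
        route_client_start route_client_end by fastforce
  next
    case False
    then have "beta (a + s - 1) = beta (a + t - 1)"
      using eq by (simp add: route_client_def)
    then have "a + s - 1 = a + t - 1"
      using s t False indices(2) by (intro inj_onD[OF beta_inj]) auto
    then show ?thesis
      using False by auto
  qed
qed

lemma adj_route_client_next: "t \<le> b - a \<Longrightarrow> adj E (orc (a + t)) (route_client t)"
  using adj_start beta_bridge[of "a + t - 1"] by (auto simp: route_client_def)

lemma adj_route_client_prev: "t \<le> b - a \<Longrightarrow> adj E (orc (a + t)) (route_client (t + 1))"
  using adj_end beta_bridge[of "a + t"] indices by (auto simp: route_client_def)

lemma route_vertex_in_clients_iff:
  assumes "i < 2 * (b - a) + 3"
  shows "route_vertex i \<in> Vc \<longleftrightarrow> even i"
proof (cases "even i")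
  case True
  have "i div 2 \<le> b - a + 1"
    using assms by presburger
  then show ?thesis
    using True route_client_in_clients by (simp add: route_vertex_def)
next
  case False
  then have "a + i div 2 \<le> b"
    using assms indices by (elim oddE) simp
  then show ?thesis
    using False orc_in_range[of "a + i div 2"] orchestrator_notin_clients
    by (simp add: route_vertex_def)
qed

lemma route_vertex_inj: "inj_on route_vertex {0..<2 * (b - a) + 3}"
proof (rule inj_onI)
  fix i j
  assume i: "i \<in> {0..<2 * (b - a) + 3}" and j: "j \<in> {0..<2 * (b - a) + 3}"
    and eq: "route_vertex i = route_vertex j"
  then have parity: "even i \<longleftrightarrow> even j"
    using route_vertex_in_clients_iff by (metis atLeastLessThan_iff)
  moreover have "i div 2 = j div 2"
  proof (cases "even i")
    case True
    have "i div 2 \<le> b - a + 1" "j div 2 \<le> b - a + 1"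
      using i j by auto
    then show ?thesis
      using True parity eq inj_onD[OF route_client_inj] by (simp add: route_vertex_def)
  next
    case False
    have "a + i div 2 \<le> b" "a + j div 2 \<le> b"
      using i j False parity indices by (auto elim!: oddE)
    moreover have "orc (a + i div 2) = orc (a + j div 2)"
      using False parity eq by (simp add: route_vertex_def)
    ultimately have "a + i div 2 = a + j div 2"
      using orc_in_range by (intro inj_onD[OF orc_inj]) auto
    then show ?thesis
      by simp
  qed
  ultimately show "i = j"
    by (metis div_mult_mod_eq even_iff_mod_2_eq_zero odd_iff_mod_2_eq_one)
qed

lemma route_vertex_even: "route_vertex (2 * t) = route_client t"
  and route_vertex_odd: "route_vertex (2 * t + 1) = orc (a + t)"
  by (simp_all add: route_vertex_def)

lemma adj_route_vertex_Suc:
  assumes "i + 1 < 2 * (b - a) + 3"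
  shows "adj E (route_vertex i) (route_vertex (i + 1))"
proof (cases "even i")
  case True
  then obtain t where i: "i = 2 * t"
    by (elim evenE)
  have "adj E (orc (a + t)) (route_client t)"
    using assms i by (intro adj_route_client_next) simp
  then show ?thesis
    unfolding i route_vertex_even route_vertex_odd by (simp add: adj_commute)
next
  case False
  then obtain t where "i = 2 * t + 1"
    by (elim oddE)
  moreover have "i + 1 = 2 * (t + 1)"
    using calculation by simp
  moreover have "adj E (orc (a + t)) (route_client (t + 1))"
    using assms calculation by (intro adj_route_client_prev) simp
  ultimately show ?thesis
    by (simp only: route_vertex_even route_vertex_odd)
qed

lemma route_is_path: "is_path E c c' route"
  unfolding is_path_def
proof (intro conjI allI impI)
  show "route \<noteq> []" "hd route = c"
    using route_client_start by (simp_all add: route_def hd_map route_vertex_def)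
  have "last route = route_vertex (2 * (b - a + 1))"
    by (simp add: route_def last_map)
  also have "\<dots> = c'"
    by (simp only: route_vertex_even route_client_end)
  finally show "last route = c'" .
  show "distinct route"
    using route_vertex_inj by (simp add: route_def distinct_map)
next
  fix i
  assume "i + 1 < length route"
  then show "{route ! i, route ! (i + 1)} \<in> E"
    using adj_route_vertex_Suc[of i] by (simp add: route_def adj_def)
qed

lemma path_length_ge:
  assumes q: "is_path E c c' q"
  shows "2 * (b - a) + 3 \<le> length q"
proof -
  have last: "q ! (length q - 1) = c'" and "0 < length q"
    using q unfolding is_path_def by (auto simp: last_conv_nth)
  then have "even (length q - 1)"
    using path_alternates[OF q clients(1), of "length q - 1"] clients(2)
      orchestrator_notin_clients by (auto split: if_splits)
  then obtain s where s: "length q - 1 = 2 * s"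
    by (elim evenE)
  have "length q \<noteq> 1"
    using clients(3) path_first[OF q] last by auto
  then have "length q = 2 * (s - 1) + 3"
    using s \<open>0 < length q\<close> by (cases s) auto
  then obtain t where t: "length q = 2 * t + 3"
    by blast
  show ?thesis
  proof (cases "a < b")
    case True
    have "2 * t + 1 < length q"
      using t by simp
    then obtain j where j: "j \<in> {1..n_o}" "q ! (2 * t + 1) = orc j" "j \<le> a + t"
      using path_orc_index_le[OF q clients(1) adj_start_index_le[OF True]] by blast
    have "adj E (orc j) c'"
      using path_adj[OF q, of "2 * t + 1"] j(2) last t by auto
    then have "b \<le> j"
      using adj_end_index_ge[OF True j(1)] by blast
    then show ?thesis
      using j(3) t by linarith
  qed (use t in auto)
qed

lemma proximity: "proximity_is E n_o orc Vc c c' (b - a + 1)"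
proof -
  have length_route: "length route = 2 * (b - a) + 3"
    by (simp add: route_def)
  then have "is_shortest_path E c c' route"
    using route_is_path path_length_ge unfolding is_shortest_path_def by simp
  moreover have "path_proximity E n_o orc Vc p = b - a + 1" if "is_shortest_path E c c' p" for p
  proof -
    have "is_path E c c' p" "length p \<le> length route"
      using that route_is_path unfolding is_shortest_path_def by auto
    then show ?thesis
      using path_proximity_client_path[OF _ clients(1)] path_length_ge length_route
      by (simp add: le_antisym)
  qed
  ultimately show ?thesis
    unfolding proximity_is_def by blast
qed

abbreviation measured :: "nat \<Rightarrow> 'a set set" where
  "measured k \<equiv> meas_seq E orc beta a k"

definition touched :: "nat \<Rightarrow> 'a set" where
  "touched k = {x. \<exists>j\<in>{a..<a + k}. x = orc j \<or> adj E (orc j) x}"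

definition measurement_invariant :: "nat \<Rightarrow> bool" where
  "measurement_invariant k \<longleftrightarrow> adj (measured k) (orc (a + k)) c \<and>
     (\<forall>u v. u \<notin> touched k \<longrightarrow> u \<noteq> orc (a + k) \<longrightarrow> adj (measured k) u v \<longleftrightarrow> adj E u v)"

lemma touched_Suc:
  "touched (Suc k) = touched k \<union> {x. x = orc (a + k) \<or> adj E (orc (a + k)) x}"
  unfolding touched_def by (auto simp: less_Suc_eq)

lemma adj_beta_cases:
  assumes "k < b - a" "adj E u (beta (a + k))"
  shows "u = orc (a + k) \<or> u = orc (a + k + 1)"
proof -
  have ak: "a \<le> a + k" "a + k < b"
    using assms(1) by auto
  then obtain j where "j \<in> {1..n_o}" "u = orc j"
    using adj_cases[OF assms(2)] beta_client orchestrator_notin_clients by blast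
  then show ?thesis
    using adj_beta_index[OF ak, of j] assms(2) by (auto simp: adj_commute)
qed

lemma beta_untouched:
  assumes k: "k < b - a"
  shows "beta (a + k) \<notin> touched k"
proof
  assume "beta (a + k) \<in> touched k"
  then obtain j where j: "a \<le> j" "j < a + k" "beta (a + k) = orc j \<or> adj E (orc j) (beta (a + k))"
    unfolding touched_def by auto
  have "beta (a + k) \<in> Vc"
    using k by (intro beta_client) auto
  then have "beta (a + k) \<noteq> orc j"
    using orc_in_range[of j] orchestrator_notin_clients j k by auto
  then have "orc j = orc (a + k) \<or> orc j = orc (a + k + 1)"
    using adj_beta_cases[OF k] j by blast
  then show False
    using orc_eq_iff j k by auto
qed

lemma next_orc_untouched:
  assumes k: "k < b - a"
  shows "orc (a + k + 1) \<notin> touched k"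
proof
  assume "orc (a + k + 1) \<in> touched k"
  then obtain j where j: "a \<le> j" "j < a + k" "orc (a + k + 1) = orc j \<or> adj E (orc j) (orc (a + k + 1))"
    unfolding touched_def by auto
  have "\<not> adj E (orc j) (orc (a + k + 1))"
    using not_adj_orchestrators orc_in_range j k by simp
  then show False
    using orc_eq_iff j k by auto
qed

lemma measurement_invariant_0: "measurement_invariant 0"
  using adj_start unfolding measurement_invariant_def by simp

lemma measured_Suc: "measured (Suc k) = meas_x (measured k) (orc (a + k)) (beta (a + k))"
  by simp

lemma adj_measured_untouched:
  "measurement_invariant k \<Longrightarrow> u \<notin> touched k \<Longrightarrow> u \<noteq> orc (a + k)
    \<Longrightarrow> adj (measured k) u v \<longleftrightarrow> adj E u v"
  unfolding measurement_invariant_def by blast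

lemma beta_ne_orc:
  assumes "k < b - a"
  shows "beta (a + k) \<noteq> orc (a + k)"
proof -
  have ak: "a \<le> a + k" "a + k < b"
    using assms by auto
  have "orc (a + k) \<notin> Vc"
    using orc_in_range[of "a + k"] orchestrator_notin_clients ak by simp
  then show ?thesis
    using beta_client[OF ak] by auto
qed

lemma measurement_support_adj:
  assumes k: "k < b - a" and inv: "measurement_invariant k"
  shows "adj (measured k) (orc (a + k)) (beta (a + k))"
proof -
  have "adj (measured k) (beta (a + k)) (orc (a + k)) \<longleftrightarrow> adj E (beta (a + k)) (orc (a + k))"
    by (rule adj_measured_untouched[OF inv beta_untouched[OF k] beta_ne_orc[OF k]])
  then show ?thesis
    using beta_bridge[of "a + k"] k adj_commute[of E] adj_commute[of "measured k"] by auto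
qed

lemma measurement_moves_edge:
  assumes k: "k < b - a" and inv: "measurement_invariant k"
  shows "adj (measured (Suc k)) (orc (a + k + 1)) c"
proof -
  let ?G = "measured k" and ?o = "orc (a + k)" and ?\<beta> = "beta (a + k)" and ?o' = "orc (a + k + 1)"
  have ak: "a \<le> a + k" "a + k < b"
    using k by auto
  have \<beta>: "?\<beta> \<in> Vc" "?\<beta> \<noteq> c" "adj E ?o ?\<beta>" "adj E ?o' ?\<beta>"
    using beta_client[OF ak] beta_ne_start[OF ak] beta_bridge[OF ak] by auto
  have orcs: "?o \<in> orchestrators" "?o' \<in> orchestrators" "?o \<noteq> ?o'"
    using orc_in_range[of "a + k"] orc_in_range[of "a + k + 1"] orc_eq_iff[of "a + k" "a + k + 1"] ak
    by auto
  have G_\<beta>: "adj ?G ?\<beta> v \<longleftrightarrow> adj E ?\<beta> v" for v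
    by (rule adj_measured_untouched[OF inv beta_untouched[OF k] beta_ne_orc[OF k]])
  have G_o': "adj ?G ?o' v \<longleftrightarrow> adj E ?o' v" for v
    by (rule adj_measured_untouched[OF inv next_orc_untouched[OF k] orcs(3)[symmetric]])
  have "adj ?G ?o c"
    using inv unfolding measurement_invariant_def by simp
  moreover have "adj ?G ?o ?\<beta>" "adj ?G ?\<beta> ?o'"
    using G_\<beta> \<beta> adj_commute[of E] adj_commute[of ?G] by metis+
  moreover have "\<not> adj ?G ?o ?o'"
    using G_o' not_adj_orchestrators[OF orcs(2,1)] adj_commute[of ?G] by metis
  moreover have "\<not> adj ?G ?\<beta> c"
    using G_\<beta> not_adj_clients[OF \<beta>(1) clients(1)] by simp
  moreover have "\<not> adj ?G c ?o'"
    using G_o' adj_start_index_le[of "a + k + 1"] orc_in_range[of "a + k + 1"] ak adj_commute[of ?G]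
    by auto
  moreover have "distinct [?o, ?\<beta>, c, ?o']"
    using orcs \<beta>(1,2) clients(1) orchestrator_notin_clients by auto
  ultimately show ?thesis
    unfolding measured_Suc by (intro meas_x_transfers_edge)
qed

lemma measurement_keeps_untouched:
  assumes k: "k < b - a" and inv: "measurement_invariant k"
    and u: "u \<notin> touched (Suc k)" "u \<noteq> orc (a + k + 1)"
  shows "adj (measured (Suc k)) u v \<longleftrightarrow> adj E u v"
proof -
  let ?G = "measured k" and ?o = "orc (a + k)" and ?\<beta> = "beta (a + k)"
  have u_untouched: "u \<notin> touched k" "u \<noteq> ?o" "\<not> adj E ?o u"
    using u unfolding touched_Suc by auto
  then have G_u: "adj ?G u w \<longleftrightarrow> adj E u w" for w
    using adj_measured_untouched[OF inv] by blast
  have "\<not> adj E u ?\<beta>"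
    using adj_beta_cases[OF k, of u] u_untouched(2) u(2) by auto
  then have not_adj: "\<not> adj ?G ?o u" "\<not> adj ?G ?\<beta> u"
    using G_u u_untouched(3) adj_commute[of E] adj_commute[of ?G] by metis+
  show ?thesis
  proof (cases "v = ?o")
    case True
    then show ?thesis
      using meas_x_isolates u_untouched(3) adj_commute[of E] by (metis measured_Suc)
  next
    case False
    then show ?thesis
      using meas_x_unchanged[OF u_untouched(2) False not_adj] G_u by simp
  qed
qed

lemma measurement_invariant_Suc:
  "k < b - a \<Longrightarrow> measurement_invariant k \<Longrightarrow> measurement_invariant (Suc k)"
  using measurement_moves_edge measurement_keeps_untouched
  unfolding measurement_invariant_def[of "Suc k"] by simp

lemma measurement_invariant: "k \<le> b - a \<Longrightarrow> measurement_invariant k"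
  by (induction k) (simp_all add: measurement_invariant_0 measurement_invariant_Suc)

lemma end_untouched: "c' \<notin> touched (b - a)"
proof
  assume "c' \<in> touched (b - a)"
  then obtain j where j: "a \<le> j" "j < b" "c' = orc j \<or> adj E (orc j) c'"
    unfolding touched_def using indices by auto
  then show False
    using adj_end_index_ge[of j] orc_in_range[of j] orchestrator_notin_clients clients(2) by auto
qed

lemma final_measurement:
  "adj (measured (b - a)) (orc b) c' \<and> adj (meas_x (measured (b - a)) (orc b) c') c c'"
proof -
  let ?G = "measured (b - a)"
  have inv: "measurement_invariant (b - a)"
    by (rule measurement_invariant) simp
  have "a + (b - a) = b"
    using indices by simp
  then have start: "adj ?G (orc b) c"
    using inv unfolding measurement_invariant_def by simp
  have "orc b \<notin> Vc"
    using orc_in_range[of b] orchestrator_notin_clients indices by simp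
  then have "c' \<noteq> orc b" "c \<noteq> orc b"
    using clients by auto
  then have G_c': "adj ?G c' v \<longleftrightarrow> adj E c' v" for v
    using adj_measured_untouched[OF inv end_untouched] \<open>a + (b - a) = b\<close> by simp
  have "adj ?G (orc b) c'"
    using G_c' adj_end adj_commute[of ?G] adj_commute[of E] by metis
  moreover have "\<not> adj ?G c' c'"
    using G_c' not_adj_self by simp
  moreover have "adj (meas_x ?G (orc b) c') c c'"
    using meas_x_joins_neighbours[of "orc b" c c' ?G] start calculation \<open>c' \<noteq> orc b\<close>
      \<open>c \<noteq> orc b\<close> clients(3) by simp
  ultimately show ?thesis
    by simp
qed

end

theorem lemma5:
  fixes V :: "'a set" and E :: "'a set set" and orc :: "nat \<Rightarrow> 'a" and Vc :: "'a set"
    and n_o k_c kb a b :: nat and c c' :: 'a and beta :: "nat \<Rightarrow> 'a"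
  assumes T: "tree_like V E n_o k_c kb orc Vc"
    and ab: "1 \<le> a" "a \<le> b" "b \<le> n_o"
    and cc: "c \<in> Vc" "c' \<in> Vc" "c \<noteq> c'"
    and ca: "c \<in> nbhd E (orc a)" and cb: "c' \<in> nbhd E (orc b)"
    and ends: "a < b \<Longrightarrow> c \<notin> nbhd E (orc (a + 1)) \<and> c' \<notin> nbhd E (orc (b - 1))"
    and beta: "\<forall>m. a \<le> m \<and> m < b \<longrightarrow> beta m \<in> nbhd E (orc m) \<inter> nbhd E (orc (m + 1))"
  shows "proximity_is E n_o orc Vc c c' (b - a + 1)
       \<and> (\<forall>k < b - a. beta (a + k) \<in> nbhd (meas_seq E orc beta a k) (orc (a + k)))
       \<and> c' \<in> nbhd (meas_seq E orc beta a (b - a)) (orc b)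
       \<and> {c, c'} \<in> meas_x (meas_seq E orc beta a (b - a)) (orc b) c'"
proof -
  interpret measurement_route V E n_o k_c kb orc Vc a b c c' beta
    using T ab cc ca cb ends beta by unfold_locales (simp_all add: nbhd_iff_adj)
  have "\<forall>k < b - a. beta (a + k) \<in> nbhd (measured k) (orc (a + k))"
    using measurement_support_adj measurement_invariant by (simp add: nbhd_iff_adj)
  then show ?thesis
    using proximity final_measurement by (simp add: nbhd_iff_adj adj_def)
qed

end
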